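(* Let $g\ge1$, $n=g+1$, and let $Q$ be the $g\times g$ matrix with $Q_{ii}=2$ and $Q_{ij}=1$ for $i\ne j$ (the tropical Riemann matrix of the genus-$g$ banana graph). The Voronoi polytope $V_Q\subset\mathbb R^g$ has dimension $g$ and exactly $2(2^g-1)$ vertices, namely the set $\bigcup_{k=1}^g[\mathbf k]$, where $[\mathbf k]$ is the set of vectors in $\mathbb R^g$ all of whose entries lie in $\{-\tfrac{k}{g+1},\tfrac{g+1-k}{g+1}\}$ and in which the number of entries equal to $\tfrac{g+1-k}{g+1}$ is either $k$ or $k-1$. The $f$-vector $(f_0,\dots,f_{g-1})$ of $V_Q$ is $f_\ell=\binom{g+1}{\ell}(2^{g+1-\ell}-2)$ for $\ell=0,\dots,g-1$.
   Context: $V_Q=\{\mathbf a\in\mathbb R^g:\ \mathbf a^TQ\mathbf a\le(\mathbf a-\mathbf c)^TQ(\mathbf a-\mathbf c)\ \text{for all }\mathbf c\in\mathbb Z^g\}$. The banana graph of genus $g$ has two vertices $v_1,v_2$ joined by $n=g+1$ edges $e_1,\dots,e_n$; with all edges oriented from $v_2$ to $v_1$ and cycle basis $e_1-e_2,\dots,e_1-e_{g+1}$, the matrix $B\in\mathbb Z^{g\times n}$ has $B_{i,1}=1$, $B_{i,i+1}=-1$ and other entries $0$, and $Q=BB^T$. *)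

theory Defs
  imports "HOL-Analysis.Analysis"
begin

text \<open>Integer lattice points in R^g (index type 'n, g = CARD('n)).\<close>
definition int_vectors :: "(real ^ 'n) set" where
  "int_vectors = {c. \<forall>i. c $ i \<in> \<int>}"

definition voronoi :: "real ^ 'n ^ 'n \<Rightarrow> (real ^ 'n) set" where
  "voronoi Q = {a. \<forall>c \<in> int_vectors. a \<bullet> (Q *v a) \<le> (a - c) \<bullet> (Q *v (a - c))}"

definition banana_Q :: "real ^ 'n ^ 'n" where
  "banana_Q = (\<chi> i j. if i = j then 2 else 1)"

definition bracket_k :: "nat \<Rightarrow> (real ^ 'n) set" where
  "bracket_k k = {x. let g = CARD('n); hi = (real g + 1 - real k) / (real g + 1);
                        lo = - real k / (real g + 1) in
                     (\<forall>i. x $ i \<in> {lo, hi}) \<and>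
                     (card {i. x $ i = hi} = k \<or> card {i. x $ i = hi} = k - 1)}"

end

(*
  In edge coordinates y = -B^T a, which sum to zero, the form a^T Q a becomes |y|^2.  Testing the
  Voronoi inequality against the lattice vector with edge coordinates e_p - e_q gives y_p - y_q <= 1,
  and conversely these inequalities suffice: they put all y_p in an interval [m, m + 1], and then
  2 z t <= z^2 + z for integers z and t in [0, 1] yields |z|^2 >= 2 <z, y> for the integral edge
  coordinates z of any lattice vector.  So V_Q is the cell of the root lattice A_g.

  A face of this cell is cut out by the inequalities that are tight on all of it, and tightness of
  y_p - y_q' = 1 and y_p' - y_q = 1 forces y_p - y_q = 1.  Hence the nonempty proper faces are the
  sets F(T, B) on which y_p - y_q = 1 for all p in T and q in B, with T and B disjoint nonempty sets
  of edges; F(T, B) determines T and B and has dimension g + 1 - |T| - |B|.  Counting such pairs gives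
  the f-vector, and the vertices are the faces F(T, -T), the points with edge coordinates
  1_T - |T| / (g + 1).
*)

theory Submission
  imports Defs
begin

section \<open>Faces of polyhedra given by inequalities\<close>

lemma in_open_segment_extension:
  fixes x c :: "'a::real_vector"
  assumes "x \<noteq> c" "0 < e"
  shows "c \<in> open_segment x (c + e *\<^sub>R (c - x))"
  unfolding in_segment
proof (intro conjI exI)
  show "x \<noteq> c + e *\<^sub>R (c - x)"
  proof
    assume "x = c + e *\<^sub>R (c - x)"
    then have "(1 + e) *\<^sub>R (x - c) = 0" by (simp add: algebra_simps)
    then show False using assms by simp
  qed
  have "1 - 1 / (1 + e) = e / (1 + e)" using assms(2) by (simp add: field_simps)
  then show "c = (1 - 1 / (1 + e)) *\<^sub>R x + (1 / (1 + e)) *\<^sub>R (c + e *\<^sub>R (c - x))"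
    using assms(2)
    by (simp add: algebra_simps) (simp add: scaleR_left_distrib[symmetric] add_divide_distrib[symmetric])
qed (use assms(2) in auto)

lemma face_of_tight_inequalities:
  fixes a :: "'i \<Rightarrow> 'a::euclidean_space" and b :: "'i \<Rightarrow> real"
  assumes S: "S = {x. \<forall>i\<in>I. a i \<bullet> x \<le> b i}" and J: "J \<subseteq> I"
  shows "{x \<in> S. \<forall>i\<in>J. a i \<bullet> x = b i} face_of S"
proof -
  have "S = (\<Inter>i\<in>I. {x. a i \<bullet> x \<le> b i})" using S by auto
  then have "convex S" by (simp add: convex_INT convex_halfspace_le)
  then have "S \<inter> {x. a i \<bullet> x = b i} face_of S" if "i \<in> I" for i
    by (rule face_of_Int_supporting_hyperplane_le) (use S that in auto)
  then have "\<Inter> (insert S ((\<lambda>i. S \<inter> {x. a i \<bullet> x = b i}) ` J)) face_of S"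
    using J \<open>convex S\<close> by (intro face_of_Inter) (auto intro: face_of_refl)
  moreover have "\<Inter> (insert S ((\<lambda>i. S \<inter> {x. a i \<bullet> x = b i}) ` J)) = {x \<in> S. \<forall>i\<in>J. a i \<bullet> x = b i}"
    by auto
  ultimately show ?thesis by simp
qed

lemma subset_hyperplane_of_rel_interior:
  fixes C :: "'a::euclidean_space set"
  assumes "convex C" "C \<subseteq> {x. a \<bullet> x \<le> b}" "c \<in> rel_interior C" "a \<bullet> c = b"
  shows "C \<subseteq> {x. a \<bullet> x = b}"
proof -
  have "C \<inter> {x. a \<bullet> x = b} face_of C"
    using assms(1,2) by (intro face_of_Int_supporting_hyperplane_le) auto
  moreover have "c \<in> C \<inter> {x. a \<bullet> x = b}" using assms(3,4) rel_interior_subset by blast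
  ultimately have "C \<inter> {x. a \<bullet> x = b} = C" using assms(3) face_of_disjoint_rel_interior by blast
  then show ?thesis by blast
qed

lemma face_of_eq_tight_inequalities:
  fixes a :: "'i \<Rightarrow> 'a::euclidean_space" and b :: "'i \<Rightarrow> real"
  assumes S: "S = {x. \<forall>i\<in>I. a i \<bullet> x \<le> b i}" and "finite I"
    and C: "C face_of S" "C \<noteq> {}"
  shows "C = {x \<in> S. \<forall>i \<in> {i \<in> I. \<forall>y\<in>C. a i \<bullet> y = b i}. a i \<bullet> x = b i}"
proof
  have "C \<subseteq> S" using C(1) by (rule face_of_imp_subset)
  then show "C \<subseteq> {x \<in> S. \<forall>i \<in> {i \<in> I. \<forall>y\<in>C. a i \<bullet> y = b i}. a i \<bullet> x = b i}"
    by auto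
  have "convex C" using C(1) by (rule face_of_imp_convex)
  then obtain c where c: "c \<in> rel_interior C"
    using C(2) rel_interior_eq_empty by blast
  then have "c \<in> C" using rel_interior_subset by blast
  have strict: "a i \<bullet> c < b i" if i: "i \<in> I" and "\<not> (\<forall>y\<in>C. a i \<bullet> y = b i)" for i
  proof (rule ccontr)
    assume "\<not> a i \<bullet> c < b i"
    moreover have "C \<subseteq> {x. a i \<bullet> x \<le> b i}" using \<open>C \<subseteq> S\<close> S i by auto
    ultimately have "C \<subseteq> {x. a i \<bullet> x = b i}"
      using \<open>c \<in> C\<close> by (intro subset_hyperplane_of_rel_interior[OF \<open>convex C\<close> _ c]) auto
    then show False using that by auto
  qed
  show "{x \<in> S. \<forall>i \<in> {i \<in> I. \<forall>y\<in>C. a i \<bullet> y = b i}. a i \<bullet> x = b i} \<subseteq> C"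
  proof
    fix x assume x: "x \<in> {x \<in> S. \<forall>i \<in> {i \<in> I. \<forall>y\<in>C. a i \<bullet> y = b i}. a i \<bullet> x = b i}"
    \<comment> \<open>Prolonging the segment from x through c a little stays inside S, so c is between two points of S.\<close>
    have "\<forall>\<^sub>F e in at_right 0. \<forall>i\<in>I. a i \<bullet> (c + e *\<^sub>R (c - x)) \<le> b i"
    proof (rule eventually_ball_finite[OF \<open>finite I\<close>], rule ballI)
      fix i assume i: "i \<in> I"
      show "\<forall>\<^sub>F e in at_right 0. a i \<bullet> (c + e *\<^sub>R (c - x)) \<le> b i"
      proof (cases "\<forall>y\<in>C. a i \<bullet> y = b i")
        case True
        then show ?thesis using x i \<open>c \<in> C\<close> by (simp add: inner_add_right inner_diff_right)
      next
        case False
        have "((\<lambda>e. a i \<bullet> (c + e *\<^sub>R (c - x))) \<longlongrightarrow> a i \<bullet> (c + 0 *\<^sub>R (c - x))) (at_right 0)"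
          by (intro tendsto_intros)
        then have "\<forall>\<^sub>F e in at_right 0. a i \<bullet> (c + e *\<^sub>R (c - x)) < b i"
          using strict[OF i False] by (intro order_tendstoD(2)) auto
        then show ?thesis by eventually_elim simp
      qed
    qed
    moreover have "\<forall>\<^sub>F e in at_right (0::real). 0 < e" by (rule eventually_at_right_less)
    ultimately have "\<forall>\<^sub>F e in at_right (0::real). 0 < e \<and> c + e *\<^sub>R (c - x) \<in> S"
      unfolding S by eventually_elim simp
    then obtain e :: real where "0 < e" and "c + e *\<^sub>R (c - x) \<in> S"
      using eventually_happens trivial_limit_at_right_real by blast
    then show "x \<in> C"
      using face_ofD[OF C(1) in_open_segment_extension] x \<open>c \<in> C\<close> by (cases "x = c") auto
  qed
qed

lemma card_extreme_points_eq_card_faces_aff_dim_0: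
  "card {v. v extreme_point_of S} = card {F. F face_of S \<and> aff_dim F = 0}"
proof -
  have "{F. F face_of S \<and> aff_dim F = 0} = (\<lambda>v. {v}) ` {v. v extreme_point_of S}"
    by (auto simp: aff_dim_eq_0 face_of_singleton)
  then show ?thesis by (simp add: card_image)
qed

section \<open>Edge coordinates\<close>

lemma sum_UNIV_option: "(\<Sum>p\<in>UNIV. f p) = f None + (\<Sum>i\<in>UNIV. f (Some i))"
  for f :: "'a::finite option \<Rightarrow> 'b::comm_monoid_add"
  by (simp add: UNIV_option_conv sum.reindex)

lemma card_option_set:
  fixes T :: "'a::finite option set"
  shows "card T = card (Some -` T) + (if None \<in> T then 1 else 0)"
proof -
  have T: "T = Some ` (Some -` T) \<union> (if None \<in> T then {None} else {})"
    by (auto simp: image_iff) (metis option.exhaust)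
  have "card T = card (Some ` (Some -` T)) + card (if None \<in> T then {None} else {} :: 'a option set)"
    by (subst T, rule card_Un_disjoint) auto
  moreover have "card (Some ` (Some -` T)) = card (Some -` T)"
    by (rule card_image) simp
  ultimately show ?thesis by simp
qed

text \<open>The edge e_1 is None and e_(i+1) is Some i; edge_coord x is -B^T x, and of_edge_coord
  inverts it on functions summing to zero.  The identity Q = B B^T appears as inner_banana_Q.\<close>
definition edge_coord :: "real ^ 'n::finite \<Rightarrow> 'n option \<Rightarrow> real" where
  "edge_coord x p = (case p of None \<Rightarrow> - (\<Sum>i\<in>UNIV. x $ i) | Some i \<Rightarrow> x $ i)"

definition of_edge_coord :: "('n::finite option \<Rightarrow> real) \<Rightarrow> real ^ 'n" where
  "of_edge_coord c = (\<chi> i. c (Some i) - (\<Sum>p\<in>UNIV. c p) / CARD('n option))"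

lemma edge_coord_Some [simp]: "edge_coord x (Some i) = x $ i"
  by (simp add: edge_coord_def)

lemma edge_coord_None [simp]: "edge_coord x None = - (\<Sum>i\<in>UNIV. x $ i)"
  by (simp add: edge_coord_def)

lemma edge_coord_diff: "edge_coord (x - y) p = edge_coord x p - edge_coord y p"
  by (cases p) (auto simp: sum_subtractf)

lemma edge_coord_scaleR: "edge_coord (a *\<^sub>R x) p = a * edge_coord x p"
  by (cases p) (auto simp: sum_distrib_left)

lemma edge_coord_sum: "edge_coord (\<Sum>r\<in>R. f r) p = (\<Sum>r\<in>R. edge_coord (f r) p)"
  by (cases p) (auto simp: sum_negf intro: sum.swap)

lemma edge_coord_zero [simp]: "edge_coord 0 p = 0"
  by (cases p) auto

lemma sum_edge_coord: "(\<Sum>p\<in>UNIV. edge_coord x p) = 0"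
  by (simp add: sum_UNIV_option)

lemma edge_coord_of_edge_coord:
  "edge_coord (of_edge_coord c) p = c p - (\<Sum>q\<in>UNIV. c q) / CARD('n option)"
  for c :: "'n::finite option \<Rightarrow> real"
proof (cases p)
  case None
  have "(\<Sum>i\<in>UNIV. of_edge_coord c $ i) = (\<Sum>q\<in>UNIV. c q) - c None - CARD('n) * ((\<Sum>q\<in>UNIV. c q) / CARD('n option))"
    by (simp add: of_edge_coord_def sum_subtractf sum_UNIV_option)
  also have "\<dots> = (\<Sum>q\<in>UNIV. c q) / CARD('n option) - c None"
    by (simp add: field_simps)
  finally show ?thesis using None by simp
qed (simp add: of_edge_coord_def)

lemma of_edge_coord_eq_iff:
  "x = of_edge_coord c \<longleftrightarrow> (\<forall>p q. edge_coord x p - edge_coord x q = c p - c q)"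
  for c :: "'n::finite option \<Rightarrow> real"
proof
  assume "\<forall>p q. edge_coord x p - edge_coord x q = c p - c q"
  then have shift: "edge_coord x p = c p + (edge_coord x None - c None)" for p
    by (metis add_diff_cancel_left' diff_add_cancel diff_diff_eq2)
  have "0 = (\<Sum>p\<in>UNIV. c p) + CARD('n option) * (edge_coord x None - c None)"
    using sum_edge_coord[of x] by (simp add: shift sum.distrib)
  then have "edge_coord x None - c None = - (\<Sum>p\<in>UNIV. c p) / CARD('n option)"
    by (simp add: field_simps)
  then have "x $ i = c (Some i) - (\<Sum>p\<in>UNIV. c p) / CARD('n option)" for i
    using shift[of "Some i"] by simp
  then show "x = of_edge_coord c" by (simp add: vec_eq_iff of_edge_coord_def)
qed (simp add: edge_coord_of_edge_coord)

lemma of_edge_coord_add: "of_edge_coord (\<lambda>p. c p + d p) = of_edge_coord c + of_edge_coord d"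
  by (simp add: vec_eq_iff of_edge_coord_def sum.distrib add_divide_distrib)

lemma of_edge_coord_scaleR: "of_edge_coord (\<lambda>p. k * c p) = k *\<^sub>R of_edge_coord c"
  by (simp add: vec_eq_iff of_edge_coord_def sum_distrib_left right_diff_distrib)

lemma inner_banana_Q:
  "x \<bullet> ((banana_Q :: real ^ 'n::finite ^ 'n) *v y) = (\<Sum>p\<in>UNIV. edge_coord x p * edge_coord y p)"
proof -
  have "((banana_Q :: real ^ 'n ^ 'n) *v y) $ i = y $ i + (\<Sum>j\<in>UNIV. y $ j)" for i
  proof -
    have "((banana_Q :: real ^ 'n ^ 'n) *v y) $ i = (\<Sum>j\<in>UNIV. y $ j + (if i = j then y $ j else 0))"
      by (auto simp: matrix_vector_mult_def banana_Q_def intro!: sum.cong)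
    then show ?thesis by (simp add: sum.distrib)
  qed
  then have "x \<bullet> ((banana_Q :: real ^ 'n ^ 'n) *v y)
      = (\<Sum>i\<in>UNIV. x $ i * y $ i) + (\<Sum>i\<in>UNIV. x $ i) * (\<Sum>j\<in>UNIV. y $ j)"
    by (simp add: inner_vec_def algebra_simps sum.distrib sum_distrib_right)
  then show ?thesis by (simp add: sum_UNIV_option)
qed

section \<open>The Voronoi cell\<close>

definition banana_cell :: "(real ^ 'n::finite) set" where
  "banana_cell = {x. \<forall>p q. edge_coord x p - edge_coord x q \<le> 1}"

lemma of_edge_coord_in_banana_cell: "of_edge_coord c \<in> banana_cell \<longleftrightarrow> (\<forall>p q. c p - c q \<le> 1)"
  by (simp add: banana_cell_def edge_coord_of_edge_coord)

lemma mem_voronoi_banana_Q_iff: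
  "x \<in> voronoi (banana_Q :: real ^ 'n::finite ^ 'n) \<longleftrightarrow>
     (\<forall>c\<in>int_vectors. 2 * (\<Sum>p\<in>UNIV. edge_coord c p * edge_coord x p) \<le> (\<Sum>p\<in>UNIV. (edge_coord c p)\<^sup>2))"
proof -
  have expand: "(x - c) \<bullet> ((banana_Q :: real ^ 'n ^ 'n) *v (x - c)) - x \<bullet> (banana_Q *v x)
      = (\<Sum>p\<in>UNIV. (edge_coord c p)\<^sup>2) - 2 * (\<Sum>p\<in>UNIV. edge_coord c p * edge_coord x p)" for c
    by (simp add: inner_banana_Q edge_coord_diff power2_eq_square algebra_simps sum_subtractf
        sum.distrib sum_distrib_left)
  have "x \<bullet> ((banana_Q :: real ^ 'n ^ 'n) *v x) \<le> (x - c) \<bullet> (banana_Q *v (x - c)) \<longleftrightarrow>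
      2 * (\<Sum>p\<in>UNIV. edge_coord c p * edge_coord x p) \<le> (\<Sum>p\<in>UNIV. (edge_coord c p)\<^sup>2)" for c
    using expand[of c] by linarith
  then show ?thesis by (simp add: voronoi_def)
qed

lemma voronoi_banana_Q_subset: "voronoi (banana_Q :: real ^ 'n::finite ^ 'n) \<subseteq> banana_cell"
proof
  fix x :: "real ^ 'n" assume x: "x \<in> voronoi banana_Q"
  have "edge_coord x p - edge_coord x q \<le> 1" for p q
  proof (cases "p = q")
    case False
    define e :: "'n option \<Rightarrow> real" where "e s = (if s = p then 1 else 0) - (if s = q then 1 else 0)" for s
    have "(\<Sum>s\<in>UNIV. e s) = 0" by (simp add: e_def sum_subtractf)
    then have e: "edge_coord (of_edge_coord e) = e"
      by (simp add: edge_coord_of_edge_coord fun_eq_iff)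
    then have "of_edge_coord e $ i = e (Some i)" for i
      by (metis edge_coord_Some)
    then have "of_edge_coord e \<in> int_vectors"
      by (simp add: int_vectors_def e_def)
    then have "2 * (\<Sum>s\<in>UNIV. edge_coord (of_edge_coord e) s * edge_coord x s)
        \<le> (\<Sum>s\<in>UNIV. (edge_coord (of_edge_coord e) s)\<^sup>2)"
      using x unfolding mem_voronoi_banana_Q_iff by blast
    moreover have "(\<Sum>s\<in>UNIV. e s * edge_coord x s)
        = (\<Sum>s\<in>UNIV. (if s = p then edge_coord x s else 0) - (if s = q then edge_coord x s else 0))"
      by (rule sum.cong) (auto simp: e_def)
    moreover have "(\<Sum>s\<in>UNIV. (e s)\<^sup>2) = (\<Sum>s\<in>UNIV. (if s = p then 1 else 0) + (if s = q then 1 else 0))"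
      by (rule sum.cong) (auto simp: e_def False)
    ultimately show ?thesis by (simp add: e sum_subtractf sum.distrib)
  qed simp
  then show "x \<in> banana_cell" by (simp add: banana_cell_def)
qed

lemma Ints_double_mult_le:
  fixes z t :: real
  assumes "z \<in> \<int>" "0 \<le> t" "t \<le> 1"
  shows "2 * z * t \<le> z\<^sup>2 + z"
proof -
  from \<open>z \<in> \<int>\<close> have "z \<le> -1 \<or> z = 0 \<or> 1 \<le> z"
    by (elim Ints_cases) (auto simp: int_le_real_less)
  moreover have "2 * z * t \<le> z\<^sup>2 + z" if "1 \<le> z"
  proof -
    have "z * t \<le> z" using that assms mult_left_le[of t z] by simp
    moreover have "z \<le> z * z" using that mult_left_mono[of 1 z z] by simp
    ultimately show ?thesis by (simp add: power2_eq_square)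
  qed
  moreover have "2 * z * t \<le> z\<^sup>2 + z" if "z \<le> -1"
    using that assms mult_nonpos_nonneg[of z t] mult_nonpos_nonpos[of z "z + 1"]
    by (simp add: power2_eq_square algebra_simps)
  ultimately show ?thesis by auto
qed

lemma banana_cell_subset_voronoi: "banana_cell \<subseteq> voronoi (banana_Q :: real ^ 'n::finite ^ 'n)"
proof
  fix x :: "real ^ 'n" assume x: "x \<in> banana_cell"
  show "x \<in> voronoi banana_Q" unfolding mem_voronoi_banana_Q_iff
  proof
    fix c :: "real ^ 'n" assume "c \<in> int_vectors"
    then have int: "edge_coord c p \<in> \<int>" for p
      by (cases p) (auto simp: int_vectors_def)
    define m where "m = Min (range (edge_coord x))"
    have "m \<in> range (edge_coord x)" unfolding m_def by (rule Min_in) auto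
    then obtain q where "m = edge_coord x q" by blast
    moreover have "m \<le> edge_coord x s" for s unfolding m_def by (rule Min_le) auto
    ultimately have "0 \<le> edge_coord x s - m" "edge_coord x s - m \<le> 1" for s
      using x by (auto simp: banana_cell_def)
    then have "(\<Sum>p\<in>UNIV. 2 * edge_coord c p * (edge_coord x p - m))
        \<le> (\<Sum>p\<in>UNIV. (edge_coord c p)\<^sup>2 + edge_coord c p)"
      by (intro sum_mono Ints_double_mult_le int)
    moreover have "(\<Sum>p\<in>UNIV. 2 * edge_coord c p * (edge_coord x p - m))
        = 2 * (\<Sum>p\<in>UNIV. edge_coord c p * edge_coord x p) - 2 * m * (\<Sum>p\<in>UNIV. edge_coord c p)"
      by (simp add: algebra_simps sum_subtractf sum_distrib_left)
    \<comment> \<open>The shift by m is harmless because the edge coordinates of c sum to zero.\<close>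
    ultimately show "2 * (\<Sum>p\<in>UNIV. edge_coord c p * edge_coord x p) \<le> (\<Sum>p\<in>UNIV. (edge_coord c p)\<^sup>2)"
      by (simp add: sum.distrib sum_edge_coord)
  qed
qed

lemma voronoi_banana_Q: "voronoi (banana_Q :: real ^ 'n::finite ^ 'n) = banana_cell"
  using voronoi_banana_Q_subset banana_cell_subset_voronoi by blast

definition edge_vec :: "'n::finite option \<Rightarrow> real ^ 'n" where
  "edge_vec p = (case p of None \<Rightarrow> - 1 | Some i \<Rightarrow> axis i 1)"

lemma edge_coord_eq_inner: "edge_coord x p = edge_vec p \<bullet> x"
proof (cases p)
  case None
  then show ?thesis by (simp add: edge_vec_def inner_vec_def sum_negf)
qed (simp add: edge_vec_def inner_axis')

lemma banana_cell_eq_inequalities: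
  "banana_cell = {x. \<forall>pq\<in>UNIV. (edge_vec (fst pq) - edge_vec (snd pq)) \<bullet> x \<le> 1}"
  by (auto simp: banana_cell_def inner_diff_left edge_coord_eq_inner)

lemma abs_edge_coord_le_1:
  assumes "x \<in> banana_cell"
  shows "\<bar>edge_coord x p\<bar> \<le> 1"
proof -
  \<comment> \<open>The edge coordinates sum to zero, so they take a nonpositive and a nonnegative value.\<close>
  have "\<not> (\<forall>q. 0 < edge_coord x q)"
    using sum_pos[of UNIV "edge_coord x"] sum_edge_coord[of x] by auto
  then obtain q where q: "edge_coord x q \<le> 0" by (auto simp: not_less)
  have "\<not> (\<forall>q. 0 < - edge_coord x q)"
    using sum_pos[of UNIV "\<lambda>q. - edge_coord x q"] sum_edge_coord[of x] by (auto simp: sum_negf)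
  then obtain q' where q': "0 \<le> edge_coord x q'" by (auto simp: not_less)
  have "edge_coord x p - edge_coord x q \<le> 1" "edge_coord x q' - edge_coord x p \<le> 1"
    using assms by (auto simp: banana_cell_def)
  then show ?thesis using q q' by linarith
qed

lemma polytope_banana_cell: "polytope (banana_cell :: (real ^ 'n::finite) set)"
proof -
  have "banana_cell = (\<Inter>pq\<in>UNIV. {x :: real ^ 'n. (edge_vec (fst pq) - edge_vec (snd pq)) \<bullet> x \<le> 1})"
    by (auto simp: banana_cell_eq_inequalities)
  moreover have "polyhedron (\<Inter>pq\<in>UNIV. {x :: real ^ 'n. (edge_vec (fst pq) - edge_vec (snd pq)) \<bullet> x \<le> 1})"
    by (rule polyhedron_Inter) (auto intro: polyhedron_halfspace_le)
  ultimately have "polyhedron (banana_cell :: (real ^ 'n) set)" by simp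
  moreover have "banana_cell \<subseteq> cbox (- 1) (1 :: real ^ 'n)"
    using abs_edge_coord_le_1[of _ "Some _"] by (fastforce simp: mem_box_cart abs_le_iff)
  then have "bounded (banana_cell :: (real ^ 'n) set)"
    using bounded_cbox bounded_subset by blast
  ultimately show ?thesis by (simp add: polytope_eq_bounded_polyhedron)
qed

definition edge_dir :: "'n::finite option \<Rightarrow> real ^ 'n" where
  "edge_dir r = of_edge_coord (\<lambda>s. if s = r then 1 else 0)"

lemma edge_dir_in_banana_cell: "edge_dir r \<in> banana_cell"
  by (simp add: edge_dir_def of_edge_coord_in_banana_cell)

lemma aff_dim_banana_cell: "aff_dim (banana_cell :: (real ^ 'n::finite) set) = CARD('n)"
proof -
  have "0 \<in> (banana_cell :: (real ^ 'n) set)" by (simp add: banana_cell_def)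
  then have hull: "affine hull (banana_cell :: (real ^ 'n) set) = span banana_cell"
    by (intro affine_hull_span_0 hull_inc)
  have "axis i 1 = edge_dir (Some i) - edge_dir None" for i :: 'n
    by (simp add: vec_eq_iff edge_dir_def of_edge_coord_def axis_def)
  then have "axis i 1 \<in> span banana_cell" for i :: 'n
    by (simp add: edge_dir_in_banana_cell span_base span_diff)
  then have "(\<Sum>i\<in>UNIV. x $ i *\<^sub>R axis i 1) \<in> span banana_cell" for x :: "real ^ 'n"
    by (intro span_sum span_scale)
  moreover have "(\<Sum>i\<in>UNIV. x $ i *\<^sub>R axis i 1) = x" for x :: "real ^ 'n"
    using basis_expansion[of x] by (simp add: scalar_mult_eq_scaleR)
  ultimately have "affine hull (banana_cell :: (real ^ 'n) set) = UNIV"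
    unfolding hull by (metis UNIV_eq_I)
  then show ?thesis by (metis aff_dim_affine_hull aff_dim_UNIV DIM_cart DIM_real mult_1_right)
qed

section \<open>Faces of the cell\<close>

definition banana_face :: "'n::finite option set \<Rightarrow> 'n option set \<Rightarrow> (real ^ 'n) set" where
  "banana_face T B = {x \<in> banana_cell. \<forall>p\<in>T. \<forall>q\<in>B. edge_coord x p - edge_coord x q = 1}"

lemma banana_face_face_of: "banana_face T B face_of banana_cell"
proof -
  have "banana_face T B
      = {x \<in> banana_cell. \<forall>pq\<in>T \<times> B. (edge_vec (fst pq) - edge_vec (snd pq)) \<bullet> x = 1}"
    by (auto simp: banana_face_def inner_diff_left edge_coord_eq_inner)
  then show ?thesis
    using face_of_tight_inequalities[OF banana_cell_eq_inequalities, of "T \<times> B"] by simp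
qed

lemma face_of_banana_cell_eq_banana_face:
  assumes C: "C face_of banana_cell" "C \<noteq> {}" "C \<noteq> banana_cell"
  obtains T B where "T \<noteq> {}" "B \<noteq> {}" "T \<inter> B = {}" "C = banana_face T B"
proof -
  define E where "E = {pq. \<forall>y\<in>C. edge_coord y (fst pq) - edge_coord y (snd pq) = 1}"
  have C_eq: "C = {x \<in> banana_cell. \<forall>pq\<in>E. edge_coord x (fst pq) - edge_coord x (snd pq) = 1}"
    using face_of_eq_tight_inequalities[OF banana_cell_eq_inequalities finite C(1,2)]
    by (simp add: E_def inner_diff_left edge_coord_eq_inner)
  define T where "T = fst ` E"
  define B where "B = snd ` E"
  have "E \<noteq> {}" using C(3) C_eq by auto
  then have "T \<noteq> {}" "B \<noteq> {}" by (auto simp: T_def B_def)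
  moreover obtain c where c: "c \<in> C" using C(2) by blast
  then have "c \<in> banana_cell" using C_eq by blast
  \<comment> \<open>Tight pairs (p, q') and (p', q) force (p, q) to be tight, as y p' - y q' is at most 1.\<close>
  have tight: "edge_coord x p - edge_coord x q = 1"
    if "x \<in> banana_cell" "(p, q') \<in> E" "(p', q) \<in> E"
       "\<forall>pq\<in>E. edge_coord x (fst pq) - edge_coord x (snd pq) = 1" for x p q p' q'
  proof -
    have "edge_coord x p - edge_coord x q' = 1" "edge_coord x p' - edge_coord x q = 1"
      using that(4) that(2,3) by force+
    moreover have "edge_coord x p' - edge_coord x q' \<le> 1" "edge_coord x p - edge_coord x q \<le> 1"
      using that(1) by (auto simp: banana_cell_def)
    ultimately show ?thesis by linarith
  qed
  have "T \<inter> B = {}"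
  proof (rule ccontr)
    assume "T \<inter> B \<noteq> {}"
    then obtain p q p' where "(p, q) \<in> E" "(p', p) \<in> E" by (force simp: T_def B_def)
    then have "edge_coord c p - edge_coord c q = 1" "edge_coord c p' - edge_coord c p = 1"
      using c by (auto simp: E_def)
    moreover have "edge_coord c p' - edge_coord c q \<le> 1"
      using \<open>c \<in> banana_cell\<close> by (simp add: banana_cell_def)
    ultimately show False by linarith
  qed
  moreover have "C = banana_face T B"
    unfolding C_eq banana_face_def T_def B_def
    by (auto intro: tight)
  ultimately show ?thesis using that by blast
qed

lemma of_edge_coord_in_banana_face:
  "of_edge_coord c \<in> banana_face T B \<longleftrightarrow> (\<forall>p q. c p - c q \<le> 1) \<and> (\<forall>p\<in>T. \<forall>q\<in>B. c p - c q = 1)"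
  by (simp add: banana_face_def of_edge_coord_in_banana_cell edge_coord_of_edge_coord)

text \<open>Edge coordinates of a point in the relative interior of banana_face T B.\<close>
definition face_centre_coord :: "'a set \<Rightarrow> 'a set \<Rightarrow> 'a \<Rightarrow> real" where
  "face_centre_coord T B p = (if p \<in> T then 1 else if p \<in> B then 0 else 1 / 2)"

lemma face_centre_in_banana_face:
  "T \<inter> B = {} \<Longrightarrow> of_edge_coord (face_centre_coord T B) \<in> banana_face T B"
  by (auto simp: of_edge_coord_in_banana_face face_centre_coord_def)

lemma face_centre_in_banana_face_imp_subset:
  assumes "of_edge_coord (face_centre_coord T B) \<in> banana_face T' B'" "T' \<noteq> {}" "B' \<noteq> {}"
  shows "T' \<subseteq> T \<and> B' \<subseteq> B"
proof -
  have "p \<in> T \<and> q \<in> B" if "p \<in> T'" "q \<in> B'" for p q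
    using assms(1) that
    by (auto simp: of_edge_coord_in_banana_face face_centre_coord_def split: if_splits)
  then show ?thesis using assms(2,3) by blast
qed

lemma banana_face_inj:
  assumes "T \<noteq> {}" "B \<noteq> {}" "T \<inter> B = {}" "T' \<noteq> {}" "B' \<noteq> {}" "T' \<inter> B' = {}"
    and "banana_face T B = banana_face T' B'"
  shows "T = T' \<and> B = B'"
  using face_centre_in_banana_face_imp_subset[of T B T' B'] face_centre_in_banana_face[of T B]
    face_centre_in_banana_face_imp_subset[of T' B' T B] face_centre_in_banana_face[of T' B'] assms
  by auto

lemma edge_coord_edge_dir:
  fixes r :: "'n::finite option"
  shows "edge_coord (edge_dir r) s = (if s = r then 1 else 0) - 1 / CARD('n option)"
  by (simp add: edge_dir_def edge_coord_of_edge_coord)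

lemma inj_edge_dir: "inj (edge_dir :: 'n::finite option \<Rightarrow> real ^ 'n)"
proof (rule injI)
  fix r r' :: "'n option" assume "edge_dir r = edge_dir r'"
  then have "edge_coord (edge_dir r) r = edge_coord (edge_dir r') r" by simp
  then show "r = r'" by (simp add: edge_coord_edge_dir split: if_splits)
qed

lemma sum_scaleR_edge_dir:
  fixes R :: "'n::finite option set"
  shows "(\<Sum>r\<in>R. f r *\<^sub>R edge_dir r) = of_edge_coord (\<lambda>s. if s \<in> R then f s else 0)"
proof -
  have "edge_coord (\<Sum>r\<in>R. f r *\<^sub>R edge_dir r) s
      = (\<Sum>r\<in>R. if s = r then f r else 0) - (\<Sum>r\<in>R. f r) / CARD('n option)" for s
  proof -
    have "edge_coord (\<Sum>r\<in>R. f r *\<^sub>R edge_dir r) s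
        = (\<Sum>r\<in>R. (if s = r then f r else 0) - f r / CARD('n option))"
      by (auto simp: edge_coord_sum edge_coord_scaleR edge_coord_edge_dir algebra_simps intro!: sum.cong)
    then show ?thesis by (simp add: sum_subtractf sum_divide_distrib)
  qed
  then show ?thesis by (simp add: of_edge_coord_eq_iff)
qed

lemma independent_edge_dir:
  fixes R :: "'n::finite option set"
  assumes "q \<notin> R"
  shows "independent (edge_dir ` R)"
proof (rule independent_if_scalars_zero)
  fix f and v :: "real ^ 'n"
  assume f: "(\<Sum>v\<in>edge_dir ` R. f v *\<^sub>R v) = 0" and "v \<in> edge_dir ` R"
  then obtain r where r: "r \<in> R" "v = edge_dir r" by blast
  have "(\<Sum>r\<in>R. f (edge_dir r) *\<^sub>R edge_dir r) = 0"
    using f by (simp add: sum.reindex inj_on_subset[OF inj_edge_dir])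
  then have "0 = of_edge_coord (\<lambda>s. if s \<in> R then f (edge_dir s) else 0)"
    by (simp add: sum_scaleR_edge_dir)
  then have "\<forall>p p'. 0 = (if p \<in> R then f (edge_dir p) else 0) - (if p' \<in> R then f (edge_dir p') else 0)"
    unfolding of_edge_coord_eq_iff by simp
  then have "0 = (if r \<in> R then f (edge_dir r) else 0) - (if q \<in> R then f (edge_dir q) else 0)"
    by blast
  then show "f v = 0" using r assms by simp
qed simp

lemma banana_face_translate_subset_span:
  assumes "T \<noteq> {}" "B \<noteq> {}" "a \<in> banana_face T B"
  shows "(+) (- a) ` banana_face T B \<subseteq> span (edge_dir ` (- (T \<union> B)))"
proof
  fix z assume "z \<in> (+) (- a) ` banana_face T B"
  then obtain x where x: "x \<in> banana_face T B" "z = x - a" by auto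
  obtain t0 where "t0 \<in> T" using assms(1) by blast
  define t where "t = edge_coord z t0"
  \<comment> \<open>Both x and a have difference 1 across every pair in T \<times> B, so z has difference 0 there.\<close>
  have "edge_coord z p = edge_coord z q" if "p \<in> T" "q \<in> B" for p q
  proof -
    have "edge_coord x p - edge_coord x q = 1" "edge_coord a p - edge_coord a q = 1"
      using x(1) assms(3) that by (auto simp: banana_face_def)
    then show ?thesis unfolding x(2) edge_coord_diff by linarith
  qed
  then have "edge_coord z s = t" if "s \<in> T \<union> B" for s
    using that \<open>t0 \<in> T\<close> assms(2) by (auto simp: t_def) metis+
  then have "z = of_edge_coord (\<lambda>s. if s \<in> - (T \<union> B) then edge_coord z s - t else 0)"
    by (auto simp: of_edge_coord_eq_iff)
  also have "\<dots> = (\<Sum>r\<in>- (T \<union> B). (edge_coord z r - t) *\<^sub>R edge_dir r)"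
    by (rule sum_scaleR_edge_dir[symmetric])
  also have "\<dots> \<in> span (edge_dir ` (- (T \<union> B)))"
    by (intro span_sum span_scale span_base imageI)
  finally show "z \<in> span (edge_dir ` (- (T \<union> B)))" .
qed

lemma aff_dim_banana_face:
  fixes T B :: "'n::finite option set"
  assumes "T \<noteq> {}" "B \<noteq> {}" "T \<inter> B = {}"
  shows "aff_dim (banana_face T B) = CARD('n option) - card T - card B"
proof -
  define a where "a = of_edge_coord (face_centre_coord T B)"
  have a: "a \<in> banana_face T B" unfolding a_def using assms(3) by (rule face_centre_in_banana_face)
  have "a + (1 / 4) *\<^sub>R edge_dir r \<in> banana_face T B" if "r \<notin> T \<union> B" for r
  proof -
    have "a + (1 / 4) *\<^sub>R edge_dir r
        = of_edge_coord (\<lambda>s. face_centre_coord T B s + 1 / 4 * (if s = r then 1 else 0))"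
      unfolding of_edge_coord_add of_edge_coord_scaleR a_def edge_dir_def by (rule refl)
    then show ?thesis using that assms(3)
      by (auto simp: of_edge_coord_in_banana_face face_centre_coord_def)
  qed
  then have "(1 / 4) *\<^sub>R edge_dir r \<in> (+) (- a) ` banana_face T B" if "r \<notin> T \<union> B" for r
    using that by (intro image_eqI[where x = "a + (1 / 4) *\<^sub>R edge_dir r"]) auto
  then have "4 *\<^sub>R (1 / 4) *\<^sub>R edge_dir r \<in> span ((+) (- a) ` banana_face T B)" if "r \<notin> T \<union> B" for r
    using that by (intro span_scale span_base)
  then have "edge_dir ` (- (T \<union> B)) \<subseteq> span ((+) (- a) ` banana_face T B)"
    by auto
  then have "span ((+) (- a) ` banana_face T B) = span (edge_dir ` (- (T \<union> B)))"
    using banana_face_translate_subset_span[OF assms(1,2) a] by (simp add: span_eq)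
  moreover obtain q where "q \<in> T" using assms(1) by blast
  then have "independent (edge_dir ` (- (T \<union> B)))" by (intro independent_edge_dir) auto
  ultimately have "dim ((+) (- a) ` banana_face T B) = card (edge_dir ` (- (T \<union> B)))"
    by (metis dim_span dim_span_eq_card_independent)
  also have "\<dots> = CARD('n option) - card T - card B"
    using assms(3) by (simp add: card_image inj_on_subset[OF inj_edge_dir] Compl_eq_Diff_UNIV
        card_Diff_subset card_Un_disjoint)
  finally show ?thesis using aff_dim_eq_dim[of a] a by (simp add: hull_inc)
qed

section \<open>The f-vector and the vertices\<close>

lemma card_disjoint_nonempty_pairs:
  assumes "1 \<le> m" "m \<le> CARD('a::finite)"
  shows "card {(T, B :: 'a set). T \<noteq> {} \<and> B \<noteq> {} \<and> T \<inter> B = {} \<and> card T + card B = m}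
         = (CARD('a) choose m) * (2 ^ m - 2)"
proof -
  define P where "P = {(T, B :: 'a set). T \<noteq> {} \<and> B \<noteq> {} \<and> T \<inter> B = {} \<and> card T + card B = m}"
  define S where "S = Sigma {U :: 'a set. card U = m} (\<lambda>U. Pow U - {{}, U})"
  have "bij_betw (\<lambda>(T, B). (T \<union> B, T)) P S"
  proof (rule bij_betw_byWitness[where f' = "\<lambda>(U, T). (T, U - T)"])
    show "(\<lambda>(U, T). (T, U - T)) ` S \<subseteq> P"
    proof clarify
      fix U T assume "(U, T) \<in> S"
      then have U: "card U = m" "T \<subseteq> U" "T \<noteq> {}" "T \<noteq> U" by (auto simp: S_def)
      then have "card T + card (U - T) = m"
        by (metis card_Diff_subset finite le_add_diff_inverse card_mono)
      then show "(T, U - T) \<in> P" using U by (auto simp: P_def)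
    qed
  qed (auto simp: P_def S_def card_Un_disjoint)
  then have "card P = card S" by (rule bij_betw_same_card)
  also have "\<dots> = (\<Sum>U :: 'a set | card U = m. card (Pow U - {{}, U}))"
    unfolding S_def by (subst card_SigmaI) auto
  also have "\<dots> = (\<Sum>U :: 'a set | card U = m. 2 ^ m - 2)"
  proof (rule sum.cong)
    fix U :: "'a set" assume "U \<in> {U. card U = m}"
    then have "card U = m" "U \<noteq> {}" using assms(1) by auto
    then show "card (Pow U - {{}, U}) = 2 ^ m - 2"
      by (simp add: card_Diff_subset card_Pow)
  qed simp
  also have "\<dots> = (CARD('a) choose m) * (2 ^ m - 2)"
    using n_subsets[of "UNIV :: 'a set" m] by simp
  finally show ?thesis by (simp add: P_def)
qed

lemma faces_banana_cell_aff_dim: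
  fixes l :: nat
  assumes "l < CARD('n::finite)"
  shows "{F. F face_of (banana_cell :: (real ^ 'n) set) \<and> aff_dim F = l}
       = (\<lambda>(T, B). banana_face T B) `
           {(T, B). T \<noteq> {} \<and> B \<noteq> {} \<and> T \<inter> B = {} \<and> card T + card B = CARD('n option) - l}"
proof (intro set_eqI iffI)
  fix F :: "(real ^ 'n) set"
  assume "F \<in> {F. F face_of banana_cell \<and> aff_dim F = l}"
  then have F: "F face_of banana_cell" "aff_dim F = l" by auto
  moreover have "F \<noteq> {}" "F \<noteq> banana_cell"
    using F(2) aff_dim_banana_cell[where 'n='n] assms by auto
  ultimately obtain T B where TB: "T \<noteq> {}" "B \<noteq> {}" "T \<inter> B = {}" "F = banana_face T B"
    by (metis face_of_banana_cell_eq_banana_face)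
  have "card T + card B \<le> CARD('n option)"
    using TB(3) card_mono[of UNIV "T \<union> B"] by (simp add: card_Un_disjoint)
  then have "card T + card B = CARD('n option) - l"
    using aff_dim_banana_face[OF TB(1-3)] TB(4) F(2) by simp
  then show "F \<in> (\<lambda>(T, B). banana_face T B) `
      {(T, B). T \<noteq> {} \<and> B \<noteq> {} \<and> T \<inter> B = {} \<and> card T + card B = CARD('n option) - l}"
    using TB by auto
next
  fix F :: "(real ^ 'n) set"
  assume "F \<in> (\<lambda>(T, B). banana_face T B) `
      {(T, B). T \<noteq> {} \<and> B \<noteq> {} \<and> T \<inter> B = {} \<and> card T + card B = CARD('n option) - l}"
  then obtain T B where TB: "T \<noteq> {}" "B \<noteq> {}" "T \<inter> B = {}"
    "card T + card B = CARD('n option) - l" "F = banana_face T B"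
    by auto
  then show "F \<in> {F. F face_of banana_cell \<and> aff_dim F = l}"
    using aff_dim_banana_face[OF TB(1-3)] banana_face_face_of assms by auto
qed

lemma card_faces_banana_cell_aff_dim:
  fixes l :: nat
  assumes "l < CARD('n::finite)"
  shows "card {F. F face_of (banana_cell :: (real ^ 'n) set) \<and> aff_dim F = l}
       = (CARD('n) + 1 choose l) * (2 ^ (CARD('n) + 1 - l) - 2)"
proof -
  let ?P = "{(T, B :: 'n option set). T \<noteq> {} \<and> B \<noteq> {} \<and> T \<inter> B = {} \<and> card T + card B = CARD('n option) - l}"
  have "inj_on (\<lambda>(T, B). banana_face T B) ?P"
  proof (rule inj_onI)
    fix P P' assume "P \<in> ?P" "P' \<in> ?P" "(\<lambda>(T, B). banana_face T B) P = (\<lambda>(T, B). banana_face T B) P'"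
    then show "P = P'"
      using banana_face_inj[of "fst P" "snd P" "fst P'" "snd P'"] by (auto simp: case_prod_beta prod_eq_iff)
  qed
  then have "card {F. F face_of (banana_cell :: (real ^ 'n) set) \<and> aff_dim F = l} = card ?P"
    unfolding faces_banana_cell_aff_dim[OF assms] by (rule card_image)
  also have "\<dots> = (CARD('n option) choose (CARD('n option) - l)) * (2 ^ (CARD('n option) - l) - 2)"
    by (rule card_disjoint_nonempty_pairs) (use assms in auto)
  also have "CARD('n option) choose (CARD('n option) - l) = CARD('n option) choose l"
    using assms by (intro binomial_symmetric[symmetric]) simp
  finally show ?thesis by simp
qed

definition banana_vertex :: "'n::finite option set \<Rightarrow> real ^ 'n" where
  "banana_vertex T = of_edge_coord (\<lambda>p. if p \<in> T then 1 else 0)"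

lemma banana_face_Compl:
  fixes T :: "'n::finite option set"
  assumes "T \<noteq> {}" "T \<noteq> UNIV"
  shows "banana_face T (- T) = {banana_vertex T}"
proof -
  have "- T \<noteq> {}" using assms(2) by auto
  moreover have "card (- T) = CARD('n option) - card T"
    by (simp add: Compl_eq_Diff_UNIV card_Diff_subset)
  ultimately have "aff_dim (banana_face T (- T)) = 0"
    using aff_dim_banana_face[OF assms(1), of "- T"] by simp
  then obtain v where "banana_face T (- T) = {v}" by (auto simp: aff_dim_eq_0)
  moreover have "banana_vertex T \<in> banana_face T (- T)"
    by (auto simp: banana_vertex_def of_edge_coord_in_banana_face)
  ultimately show ?thesis by simp
qed

lemma extreme_points_banana_cell:
  "{v. v extreme_point_of (banana_cell :: (real ^ 'n::finite) set)} = banana_vertex ` {T. T \<noteq> {} \<and> T \<noteq> UNIV}"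
proof (intro set_eqI iffI)
  fix v :: "real ^ 'n" assume "v \<in> {v. v extreme_point_of banana_cell}"
  then have "{v} \<in> {F. F face_of (banana_cell :: (real ^ 'n) set) \<and> aff_dim F = int 0}"
    by (simp add: face_of_singleton)
  then obtain T B where TB: "T \<noteq> {}" "B \<noteq> {}" "T \<inter> B = {}" "card T + card B = CARD('n option)"
    "{v} = banana_face T B"
    unfolding faces_banana_cell_aff_dim[OF zero_less_card_finite] by auto
  then have "card (T \<union> B) = card (UNIV :: 'n option set)" by (simp add: card_Un_disjoint)
  then have "T \<union> B = UNIV" by (intro card_subset_eq) auto
  then have "B = - T" using TB(3) by auto
  then have "T \<noteq> UNIV" using TB(2) by auto
  then have "v = banana_vertex T" using banana_face_Compl[OF TB(1)] TB(5) \<open>B = - T\<close> by simp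
  then show "v \<in> banana_vertex ` {T. T \<noteq> {} \<and> T \<noteq> UNIV}"
    using TB(1) \<open>T \<noteq> UNIV\<close> by blast
next
  fix v :: "real ^ 'n" assume "v \<in> banana_vertex ` {T. T \<noteq> {} \<and> T \<noteq> UNIV}"
  then obtain T where "T \<noteq> {}" "T \<noteq> UNIV" "v = banana_vertex T" by auto
  then show "v \<in> {v. v extreme_point_of banana_cell}"
    using banana_face_face_of[of T "- T"] banana_face_Compl[of T] by (simp add: face_of_singleton)
qed

lemma banana_vertex_nth:
  fixes T :: "'n::finite option set"
  shows "banana_vertex T $ i = (if Some i \<in> T then 1 else 0) - card T / CARD('n option)"
  by (simp add: banana_vertex_def of_edge_coord_def sum.If_cases)

lemma bracket_k_eq: "(bracket_k k :: (real ^ 'n::finite) set) = banana_vertex ` {T. card T = k}"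
proof -
  define hi where "hi = (real CARD('n) + 1 - real k) / (real CARD('n) + 1)"
  define lo where "lo = - real k / (real CARD('n) + 1)"
  have hi: "hi = 1 - k / CARD('n option)" and "lo \<noteq> hi"
    by (auto simp: hi_def lo_def field_simps)
  have mem: "x \<in> bracket_k k \<longleftrightarrow>
      (\<forall>i. x $ i \<in> {lo, hi}) \<and> (card {i. x $ i = hi} = k \<or> card {i. x $ i = hi} = k - 1)" for x :: "real ^ 'n"
    by (simp add: bracket_k_def hi_def lo_def Let_def)
  have vertex: "banana_vertex T $ i = (if Some i \<in> T then hi else lo)" if "card T = k"
    for T :: "'n option set" and i
    using that by (simp add: banana_vertex_nth hi lo_def)
  show ?thesis
  proof (intro set_eqI iffI)
    fix x :: "real ^ 'n" assume "x \<in> bracket_k k"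
    then have x: "\<forall>i. x $ i \<in> {lo, hi}" and S: "card {i. x $ i = hi} = k \<or> card {i. x $ i = hi} = k - 1"
      by (auto simp: mem)
    define T where "T = Some ` {i. x $ i = hi} \<union> (if card {i. x $ i = hi} = k then {} else {None})"
    have "Some -` T = {i. x $ i = hi}" by (auto simp: T_def)
    then have "card T = k"
      using card_option_set[of T] S by (auto simp: T_def)
    moreover have "x = banana_vertex T"
      using x \<open>card T = k\<close> \<open>Some -` T = {i. x $ i = hi}\<close> by (auto simp: vec_eq_iff vertex)
    ultimately show "x \<in> banana_vertex ` {T. card T = k}" by blast
  next
    fix x :: "real ^ 'n" assume "x \<in> banana_vertex ` {T. card T = k}"
    then obtain T where T: "card T = k" "x = banana_vertex T" by auto
    then have "\<forall>i. x $ i \<in> {lo, hi}" by (simp add: vertex)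
    moreover have "{i. x $ i = hi} = Some -` T" using T \<open>lo \<noteq> hi\<close> by (auto simp: vertex)
    then have "card {i. x $ i = hi} = k \<or> card {i. x $ i = hi} = k - 1"
      using card_option_set[of T] T(1) by auto
    ultimately show "x \<in> bracket_k k" unfolding mem by blast
  qed
qed

lemma Union_bracket_k:
  "(\<Union>k\<in>{1..CARD('n::finite)}. (bracket_k k :: (real ^ 'n) set)) = banana_vertex ` {T. T \<noteq> {} \<and> T \<noteq> UNIV}"
proof -
  have "T \<noteq> UNIV \<longleftrightarrow> card T < CARD('n option)" for T :: "'n option set"
    using psubset_card_mono[of UNIV T] by (auto simp: psubset_eq)
  then have "T \<noteq> UNIV \<longleftrightarrow> card T \<le> CARD('n)" for T :: "'n option set"
    by (simp add: less_Suc_eq_le)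
  then have "T \<noteq> {} \<and> T \<noteq> UNIV \<longleftrightarrow> card T \<in> {1..CARD('n)}" for T :: "'n option set"
    by (auto simp: Suc_le_eq card_gt_0_iff)
  then show ?thesis by (auto simp: bracket_k_eq)
qed

theorem theorem3p1:
  fixes V :: "(real ^ 'n) set"
  defines "V \<equiv> voronoi (banana_Q :: real ^ 'n ^ 'n)"
  shows "polytope V
    \<and> aff_dim V = int CARD('n)
    \<and> {v. v extreme_point_of V} = (\<Union>k\<in>{1..CARD('n)}. bracket_k k)
    \<and> card {v. v extreme_point_of V} = 2 * (2 ^ CARD('n) - 1)
    \<and> (\<forall>l < CARD('n). card {F. F face_of V \<and> aff_dim F = int l}
          = (CARD('n) + 1 choose l) * (2 ^ (CARD('n) + 1 - l) - 2))"
proof (intro conjI allI impI)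
  have V: "V = banana_cell" unfolding V_def by (rule voronoi_banana_Q)
  show "polytope V" unfolding V by (rule polytope_banana_cell)
  show "aff_dim V = int CARD('n)" unfolding V by (rule aff_dim_banana_cell)
  show "{v. v extreme_point_of V} = (\<Union>k\<in>{1..CARD('n)}. bracket_k k)"
    unfolding V extreme_points_banana_cell Union_bracket_k ..
  show "card {F. F face_of V \<and> aff_dim F = int l} = (CARD('n) + 1 choose l) * (2 ^ (CARD('n) + 1 - l) - 2)"
    if "l < CARD('n)" for l
    unfolding V using that by (rule card_faces_banana_cell_aff_dim)
  have "card {v. v extreme_point_of V} = card {F. F face_of V \<and> aff_dim F = int 0}"
    by (simp add: card_extreme_points_eq_card_faces_aff_dim_0)
  also have "\<dots> = 2 ^ (CARD('n) + 1) - 2"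
    unfolding V using card_faces_banana_cell_aff_dim[OF zero_less_card_finite] by simp
  finally show "card {v. v extreme_point_of V} = 2 * (2 ^ CARD('n) - 1)"
    by (simp add: right_diff_distrib')
qed

end
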